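(* Let $K=\mathrm{SU}(2)$ and $\mathcal{M}=\{(g_1,h_1,g_2,h_2)\in K^4:[g_1,h_1][g_2,h_2]=I\}/K$. There is a one-to-one correspondence between the subsets $$\{(g,h,h,g)\in K^4 : [g,h]\neq\pm I\}/K$$ and $$\{(g,h,khk^{-1},kgk^{-1})\in K^4 : [g,h]=k^{-1}[g,h]k,\ [g,h]\neq\pm I,\ k^2=-I\}/K$$ of $\mathcal{M}$.
   Context: $[a,b]=aba^{-1}b^{-1}$; $K$ acts on quadruples by simultaneous conjugation and $\mathcal{M}$ is the quotient. Both displayed sets consist of quadruples satisfying $[g_1,h_1][g_2,h_2]=I$, and their images in $\mathcal{M}$ are meant. *)

theory Defs
  imports "HOL-Analysis.Analysis"
begin

type_synonym mat2 = "complex^2^2"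
type_synonym quad = "mat2 \<times> mat2 \<times> mat2 \<times> mat2"

definition adj2 :: "mat2 \<Rightarrow> mat2" where
  "adj2 A = (\<chi> i j. cnj (A $ j $ i))"

definition SU2 :: "mat2 set" where
  "SU2 = {A. adj2 A ** A = mat 1 \<and> A ** adj2 A = mat 1 \<and> det A = 1}"

definition comm :: "mat2 \<Rightarrow> mat2 \<Rightarrow> mat2" where
  "comm a b = a ** b ** matrix_inv a ** matrix_inv b"

definition conjq :: "mat2 \<Rightarrow> quad \<Rightarrow> quad" where
  "conjq k q = (case q of (g1, h1, g2, h2) \<Rightarrow>
     (k ** g1 ** matrix_inv k, k ** h1 ** matrix_inv k,
      k ** g2 ** matrix_inv k, k ** h2 ** matrix_inv k))"

text \<open>The K-orbit of a quadruple under simultaneous conjugation (a point of the quotient).\<close>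
definition orbitK :: "quad \<Rightarrow> quad set" where
  "orbitK q = (\<lambda>k. conjq k q) ` SU2"

definition RepsK :: "quad set" where
  "RepsK = {(g1, h1, g2, h2). g1 \<in> SU2 \<and> h1 \<in> SU2 \<and> g2 \<in> SU2 \<and> h2 \<in> SU2 \<and>
                   comm g1 h1 ** comm g2 h2 = mat 1}"

definition ModM :: "quad set set" where
  "ModM = orbitK ` RepsK"

end

theory Submission
  imports Defs
begin

text \<open>
  Every element of SU(2) is a unit quaternion, and k k = -I holds exactly for the unit quaternions
  with zero real part. If c is not \<plusminus>I, the elements of SU(2) commuting with c are those whose
  imaginary part is parallel to the nonzero imaginary part of c, so the square roots of -I commuting
  with c form a single pair \<plusminus>k. Forgetting the last two entries,
  (g, h, k h k\<inverse>, k g k\<inverse>) \<mapsto> (g, h, h, g), commutes with conjugation and hence descends to orbits.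
  It is onto because such a k exists, and injective because k is determined up to a sign, which does
  not affect conjugation, and is carried along by any conjugation matching the first two entries.
\<close>

section \<open>SU(2) as unit quaternions\<close>

text \<open>The matrix [[a, -cnj b], [b, cnj a]] of the quaternion a + b j.\<close>
definition quat_mat :: "complex \<Rightarrow> complex \<Rightarrow> mat2" where
  "quat_mat a b = (\<chi> i j. if i = 1 then (if j = 1 then a else - cnj b) else (if j = 1 then b else cnj a))"

lemma quat_mat_nth [simp]:
  "quat_mat a b $ 1 $ 1 = a" "quat_mat a b $ 1 $ 2 = - cnj b"
  "quat_mat a b $ 2 $ 1 = b" "quat_mat a b $ 2 $ 2 = cnj a"
  by (simp_all add: quat_mat_def)

lemma mat2_eq_iff:
  "(A::mat2) = B \<longleftrightarrow> A$1$1 = B$1$1 \<and> A$1$2 = B$1$2 \<and> A$2$1 = B$2$1 \<and> A$2$2 = B$2$2"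
  by (auto simp: vec_eq_iff forall_2)

lemma mat2_mult_nth: "((A::mat2) ** B) $ i $ j = A$i$1 * B$1$j + A$i$2 * B$2$j"
  by (simp add: matrix_matrix_mult_def sum_2)

lemma mat2_one_nth:
  "(mat 1 :: mat2) $ 1 $ 1 = 1" "(mat 1 :: mat2) $ 1 $ 2 = 0"
  "(mat 1 :: mat2) $ 2 $ 1 = 0" "(mat 1 :: mat2) $ 2 $ 2 = 1"
  by (simp_all add: mat_def)

lemma mat2_uminus_mult [simp]: "(- A :: mat2) ** B = - (A ** B)"
  by (simp add: matrix_matrix_mult_def vec_eq_iff sum_negf)

lemma mat2_mult_uminus [simp]: "(A :: mat2) ** (- B) = - (A ** B)"
  by (simp add: matrix_matrix_mult_def vec_eq_iff sum_negf)

lemma mat_one_quat_mat: "(mat 1 :: mat2) = quat_mat 1 0"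
  by (simp add: mat2_eq_iff mat2_one_nth)

lemma neg_mat_one_quat_mat: "(- mat 1 :: mat2) = quat_mat (-1) 0"
  by (simp add: mat2_eq_iff mat2_one_nth)

lemma neg_quat_mat: "- quat_mat a b = quat_mat (-a) (-b)"
  by (simp add: mat2_eq_iff)

lemma quat_mat_mult: "quat_mat a b ** quat_mat c d = quat_mat (a*c - cnj b * d) (b*c + cnj a * d)"
  by (simp add: mat2_eq_iff mat2_mult_nth algebra_simps)

lemma adj2_quat_mat: "adj2 (quat_mat a b) = quat_mat (cnj a) (-b)"
  by (simp add: mat2_eq_iff adj2_def)

lemma quat_mat_eq_iff: "quat_mat a b = quat_mat c d \<longleftrightarrow> a = c \<and> b = d"
  by (auto simp: mat2_eq_iff)

lemma SU2_iff_quat_mat: "A \<in> SU2 \<longleftrightarrow> (\<exists>a b. A = quat_mat a b \<and> a * cnj a + b * cnj b = 1)"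
proof
  assume "A \<in> SU2"
  define x y z w where "x = A$1$1" and "y = A$1$2" and "z = A$2$1" and "w = A$2$2"
  have unitary: "x * cnj x + y * cnj y = 1" "x * cnj z + y * cnj w = 0"
    "z * cnj z + w * cnj w = 1"
    using \<open>A \<in> SU2\<close> by (auto simp: SU2_def mat2_eq_iff mat2_mult_nth adj2_def mat2_one_nth x_def y_def z_def w_def)
  have det: "x * w - y * z = 1"
    using \<open>A \<in> SU2\<close> by (simp add: SU2_def det_2 x_def y_def z_def w_def)
  have "cnj x * z + cnj y * w = 0" using arg_cong[OF unitary(2), of cnj] by simp
  then have "w = cnj x" "y = - cnj z" using unitary det by algebra+
  then have "A = quat_mat x z" and "x * cnj x + z * cnj z = 1"
    using unitary(1) by (auto simp: mat2_eq_iff x_def y_def z_def w_def mult.commute)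
  then show "\<exists>a b. A = quat_mat a b \<and> a * cnj a + b * cnj b = 1" by blast
next
  assume "\<exists>a b. A = quat_mat a b \<and> a * cnj a + b * cnj b = 1"
  then show "A \<in> SU2"
    by (auto simp: SU2_def adj2_quat_mat quat_mat_mult mat_one_quat_mat det_2 quat_mat_eq_iff algebra_simps)
qed

lemma quat_mat_in_SU2: "a * cnj a + b * cnj b = 1 \<Longrightarrow> quat_mat a b \<in> SU2"
  unfolding SU2_iff_quat_mat by (intro exI conjI) (rule refl)

lemma SU2_mult [simp]:
  assumes "A \<in> SU2" "B \<in> SU2"
  shows "A ** B \<in> SU2"
proof -
  obtain a b c d where AB: "A = quat_mat a b" "B = quat_mat c d"
    and unit: "a * cnj a + b * cnj b = 1" "c * cnj c + d * cnj d = 1"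
    using assms unfolding SU2_iff_quat_mat by blast
  have "(a*c - cnj b * d) * cnj (a*c - cnj b * d) + (b*c + cnj a * d) * cnj (b*c + cnj a * d) = 1"
    using unit by simp algebra
  then show ?thesis using AB by (simp add: quat_mat_mult quat_mat_in_SU2)
qed

lemma SU2_matrix_inv_eq_adj2:
  assumes "A \<in> SU2"
  shows "matrix_inv A = adj2 A"
proof -
  have unitary: "adj2 A ** A = mat 1" "A ** adj2 A = mat 1" using assms by (simp_all add: SU2_def)
  then have "\<exists>B. A ** B = mat 1 \<and> B ** A = mat 1" by blast
  then have "A ** matrix_inv A = mat 1 \<and> matrix_inv A ** A = mat 1"
    unfolding matrix_inv_def by (rule someI_ex)
  then have "matrix_inv A = matrix_inv A ** (A ** adj2 A)" by (simp add: unitary)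
  also have "\<dots> = adj2 A"
    using \<open>A ** matrix_inv A = mat 1 \<and> matrix_inv A ** A = mat 1\<close> by (simp add: matrix_mul_assoc)
  finally show ?thesis .
qed

lemma SU2_matrix_inv [simp]:
  assumes "A \<in> SU2"
  shows "matrix_inv A \<in> SU2"
proof -
  obtain a b where "A = quat_mat a b" "a * cnj a + b * cnj b = 1"
    using assms unfolding SU2_iff_quat_mat by blast
  then show ?thesis
    using assms quat_mat_in_SU2[of "cnj a" "- b"] by (simp add: SU2_matrix_inv_eq_adj2 adj2_quat_mat mult.commute)
qed

lemma SU2_mat_one [simp]: "mat 1 \<in> SU2"
  by (simp add: mat_one_quat_mat quat_mat_in_SU2)

lemma SU2_uminus [simp]: "A \<in> SU2 \<Longrightarrow> - A \<in> SU2"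
  using quat_mat_in_SU2[of "- a" "- b" for a b] by (auto simp: SU2_iff_quat_mat neg_quat_mat)

lemma SU2_right_inverse [simp]: "A \<in> SU2 \<Longrightarrow> A ** matrix_inv A = mat 1"
  and SU2_left_inverse [simp]: "A \<in> SU2 \<Longrightarrow> matrix_inv A ** A = mat 1"
  by (simp_all add: SU2_matrix_inv_eq_adj2 SU2_def)

lemma SU2_mult_inverse_cancel_left [simp]: "A \<in> SU2 \<Longrightarrow> A ** (matrix_inv A ** X) = X"
  and SU2_inverse_mult_cancel_left [simp]: "A \<in> SU2 \<Longrightarrow> matrix_inv A ** (A ** X) = X"
  by (simp_all add: matrix_mul_assoc)

lemma SU2_matrix_inv_unique:
  assumes "A \<in> SU2" "A ** B = mat 1"
  shows "matrix_inv A = B"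
  using SU2_inverse_mult_cancel_left[OF assms(1), of B] assms(2) by simp

lemma SU2_matrix_inv_mult_distrib [simp]:
  "A \<in> SU2 \<Longrightarrow> B \<in> SU2 \<Longrightarrow> matrix_inv (A ** B) = matrix_inv B ** matrix_inv A"
  by (rule SU2_matrix_inv_unique) (simp_all flip: matrix_mul_assoc)

lemma SU2_matrix_inv_uminus [simp]: "A \<in> SU2 \<Longrightarrow> matrix_inv (- A) = - matrix_inv A"
  by (rule SU2_matrix_inv_unique) simp_all

lemma matrix_inv_mat_one [simp]: "matrix_inv (mat 1 :: mat2) = mat 1"
  by (rule SU2_matrix_inv_unique) simp_all

lemmas mat2_mult_assoc_right = matrix_mul_assoc[symmetric]

section \<open>Square roots of -I commuting with a given element\<close>

lemma parallel_unit_vectors_eq_or_neg: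
  fixes p q r t u s t' u' s' :: real
  assumes nonzero: "p^2 + q^2 + r^2 \<noteq> 0"
    and par: "u*p = q*t" "s*p = r*t" "u*r = s*q" and unit: "t^2 + u^2 + s^2 = 1"
    and par': "u'*p = q*t'" "s'*p = r*t'" "u'*r = s'*q" and unit': "t'^2 + u'^2 + s'^2 = 1"
  shows "(t' = t \<and> u' = u \<and> s' = s) \<or> (t' = -t \<and> u' = -u \<and> s' = -s)"
proof -
  define n S S' where "n = p^2 + q^2 + r^2" and "S = t*p + u*q + s*r" and "S' = t'*p + u'*q + s'*r"
  have n0: "n \<noteq> 0" using nonzero n_def by simp
  have proj: "n*t = S*p" "n*u = S*q" "n * s = S*r" using par unfolding n_def S_def by algebra+
  have proj': "n*t' = S'*p" "n*u' = S'*q" "n * s' = S'*r" using par' unfolding n_def S'_def by algebra+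
  have "n*n*(t^2 + u^2 + s^2) = S*S*n" using proj unfolding n_def by algebra
  then have "S*S = n" using unit n0 by (simp add: mult.commute)
  moreover have "n*n*(t'^2 + u'^2 + s'^2) = S'*S'*n" using proj' unfolding n_def by algebra
  then have "S'*S' = n" using unit' n0 by (simp add: mult.commute)
  ultimately have "(S' - S) * (S' + S) = 0" by (simp add: algebra_simps)
  then have "S' = S \<or> S' = -S" by auto
  then show ?thesis
  proof
    assume "S' = S"
    then show ?thesis using proj proj' n0 by (metis mult_left_cancel)
  next
    assume "S' = -S"
    then have "n*t' = n*(-t)" "n*u' = n*(-u)" "n * s' = n*(-s)" using proj proj' by auto
    then show ?thesis using n0 mult_left_cancel by blast
  qed
qed

lemma sqrt_neg1_commuting_coords:
  assumes unit: "x * cnj x + y * cnj y = 1" and sq: "quat_mat x y ** quat_mat x y = - mat 1"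
    and commute: "quat_mat x y ** quat_mat a b = quat_mat a b ** quat_mat x y"
  shows "Re x = 0" "Re y * Im a = Re b * Im x" "Im y * Im a = Im b * Im x"
    "Re y * Im b = Im y * Re b" "Im x ^ 2 + Re y ^ 2 + Im y ^ 2 = 1"
proof -
  have sq': "x*x - cnj y * y = -1" using sq by (simp add: quat_mat_mult neg_mat_one_quat_mat quat_mat_eq_iff)
  have commute': "x*a - cnj y * b = a*x - cnj b * y" "y*a + cnj x * b = b*x + cnj a * y"
    using commute by (simp_all add: quat_mat_mult quat_mat_eq_iff)
  have unit': "Re x ^ 2 + Im x ^ 2 + Re y ^ 2 + Im y ^ 2 = 1"
    using arg_cong[OF unit, of Re] by (simp add: power2_eq_square)
  have "Re x ^ 2 - Im x ^ 2 - Re y ^ 2 - Im y ^ 2 = -1"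
    using arg_cong[OF sq', of Re] by (simp add: power2_eq_square)
  then have "Re x ^ 2 = 0" using unit' by linarith
  then show re: "Re x = 0" by simp
  show "Im x ^ 2 + Re y ^ 2 + Im y ^ 2 = 1" using unit' re by simp
  show "Re y * Im b = Im y * Re b" using arg_cong[OF commute'(1), of Im] by (simp add: algebra_simps)
  show "Re y * Im a = Re b * Im x" using arg_cong[OF commute'(2), of Im] re by (simp add: algebra_simps)
  show "Im y * Im a = Im b * Im x" using arg_cong[OF commute'(2), of Re] re by (simp add: algebra_simps)
qed

lemma quat_mat_imag_nonzero:
  assumes unit: "a * cnj a + b * cnj b = 1" and "quat_mat a b \<noteq> mat 1" "quat_mat a b \<noteq> - mat 1"
  shows "Im a ^ 2 + Re b ^ 2 + Im b ^ 2 \<noteq> 0"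
proof
  assume "Im a ^ 2 + Re b ^ 2 + Im b ^ 2 = 0"
  then have imag: "Im a = 0" "Re b = 0" "Im b = 0" by (auto simp: add_nonneg_eq_0_iff)
  have "Re a ^ 2 + Im a ^ 2 + Re b ^ 2 + Im b ^ 2 = 1"
    using arg_cong[OF unit, of Re] by (simp add: power2_eq_square)
  then have "Re a = 1 \<or> Re a = -1" using imag by (simp add: power2_eq_1_iff)
  then have "a = 1 \<or> a = -1" and "b = 0" using imag by (auto simp: complex_eq_iff)
  then show False using assms by (auto simp: mat_one_quat_mat neg_quat_mat)
qed

lemma SU2_sqrt_neg1_commuting_unique:
  assumes "c \<in> SU2" "c \<noteq> mat 1" "c \<noteq> - mat 1" "k \<in> SU2" "k' \<in> SU2"
    and "k ** k = - mat 1" "k' ** k' = - mat 1" "k ** c = c ** k" "k' ** c = c ** k'"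
  shows "k' = k \<or> k' = - k"
proof -
  obtain a b where c: "c = quat_mat a b" "a * cnj a + b * cnj b = 1"
    using assms(1) unfolding SU2_iff_quat_mat by blast
  obtain x y where k: "k = quat_mat x y" "x * cnj x + y * cnj y = 1"
    using assms(4) unfolding SU2_iff_quat_mat by blast
  obtain x' y' where k': "k' = quat_mat x' y'" "x' * cnj x' + y' * cnj y' = 1"
    using assms(5) unfolding SU2_iff_quat_mat by blast
  note coords = sqrt_neg1_commuting_coords[OF k(2)] and coords' = sqrt_neg1_commuting_coords[OF k'(2)]
  have "(Im x' = Im x \<and> Re y' = Re y \<and> Im y' = Im y) \<or> (Im x' = - Im x \<and> Re y' = - Re y \<and> Im y' = - Im y)"
    by (rule parallel_unit_vectors_eq_or_neg[OF quat_mat_imag_nonzero[OF c(2)]])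
      (use assms c k k' coords coords' in auto)
  then show ?thesis using coords(1) coords'(1) assms c k k'
    by (auto simp: neg_quat_mat quat_mat_eq_iff complex_eq_iff)
qed

lemma SU2_sqrt_neg1_commuting_exists:
  assumes "c \<in> SU2" "c \<noteq> mat 1" "c \<noteq> - mat 1"
  obtains k where "k \<in> SU2" "k ** k = - mat 1" "k ** c = c ** k"
proof -
  obtain a b where c: "c = quat_mat a b" "a * cnj a + b * cnj b = 1"
    using assms(1) unfolding SU2_iff_quat_mat by blast
  define N where "N = Im a ^ 2 + Re b ^ 2 + Im b ^ 2"
  have "N > 0" using quat_mat_imag_nonzero[OF c(2)] assms c unfolding N_def
    by (metis add_nonneg_nonneg less_eq_real_def zero_le_power2)
  define r where "r = sqrt N"
  have "r > 0" "r * r = N" using \<open>N > 0\<close> by (simp_all add: r_def)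
  \<comment> \<open>k is the normalised imaginary part of c\<close>
  define p q z where "p = Im a / r" and "q = Re b / r" and "z = Im b / r"
  have "p*p + q*q + z*z = N / (r*r)"
    unfolding p_def q_def z_def N_def by (simp add: add_divide_distrib power2_eq_square)
  then have unit: "p*p + q*q + z*z = 1" using \<open>r * r = N\<close> \<open>N > 0\<close> by simp
  have par: "q * Im a = Re b * p" "z * Im a = Im b * p" "q * Im b = z * Re b"
    unfolding p_def q_def z_def by simp_all
  define x y where "x = Complex 0 p" and "y = Complex q z"
  have "x * cnj x + y * cnj y = 1" "x*x - cnj y * y = -1" "y*x + cnj x*y = 0"
    "x*a - cnj y * b = a*x - cnj b * y" "y*a + cnj x * b = b*x + cnj a * y"
    using unit par unfolding x_def y_def complex_eq_iff by (simp_all add: algebra_simps)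
  then show ?thesis
    by (intro that[of "quat_mat x y"])
      (simp_all add: c quat_mat_in_SU2 quat_mat_mult neg_mat_one_quat_mat quat_mat_eq_iff)
qed

lemma SU2_sqrt_neg1_commuting_conj:
  assumes "c \<in> SU2" "c \<noteq> mat 1" "c \<noteq> - mat 1" "k \<in> SU2" "k' \<in> SU2" "m \<in> SU2"
    and "k ** k = - mat 1" "k' ** k' = - mat 1" "k ** c = c ** k"
    and "k' ** (m ** c ** matrix_inv m) = (m ** c ** matrix_inv m) ** k'"
  shows "k' = m ** k ** matrix_inv m \<or> k' = - (m ** k ** matrix_inv m)"
proof (rule SU2_sqrt_neg1_commuting_unique[where c = "m ** c ** matrix_inv m"])
  have "c = matrix_inv m ** (m ** c ** matrix_inv m) ** m"
    using assms(6) by (simp add: mat2_mult_assoc_right)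
  then show "m ** c ** matrix_inv m \<noteq> mat 1" "m ** c ** matrix_inv m \<noteq> - mat 1"
    using assms(2,3,6) by auto
  have "m ** (k ** (c ** X)) = m ** (c ** (k ** X))" for X
    using assms(9) by (metis matrix_mul_assoc)
  from this[of "matrix_inv m"]
  show "(m ** k ** matrix_inv m) ** (m ** c ** matrix_inv m)
      = (m ** c ** matrix_inv m) ** (m ** k ** matrix_inv m)"
    using assms(6) by (simp add: mat2_mult_assoc_right)
  have "m ** (k ** (k ** X)) = - (m ** X)" for X
    using assms(7) by (simp add: matrix_mul_assoc)
  from this[of "matrix_inv m"]
  show "(m ** k ** matrix_inv m) ** (m ** k ** matrix_inv m) = - mat 1"
    using assms(6) by (simp add: mat2_mult_assoc_right)
qed (use assms in auto)

lemma comm_SU2 [simp]: "g \<in> SU2 \<Longrightarrow> h \<in> SU2 \<Longrightarrow> comm g h \<in> SU2"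
  by (simp add: comm_def)

lemma comm_mult_comm_swap: "g \<in> SU2 \<Longrightarrow> h \<in> SU2 \<Longrightarrow> comm g h ** comm h g = mat 1"
  by (simp add: comm_def mat2_mult_assoc_right)

lemma comm_conj:
  "g \<in> SU2 \<Longrightarrow> h \<in> SU2 \<Longrightarrow> k \<in> SU2 \<Longrightarrow>
   comm (k ** g ** matrix_inv k) (k ** h ** matrix_inv k) = k ** comm g h ** matrix_inv k"
  by (simp add: comm_def mat2_mult_assoc_right)

lemma conj_fixed_iff_commute:
  assumes "k \<in> SU2"
  shows "c = matrix_inv k ** c ** k \<longleftrightarrow> k ** c = c ** k"
proof
  assume "c = matrix_inv k ** c ** k"
  then have "k ** c = k ** (matrix_inv k ** c ** k)" by simp
  then show "k ** c = c ** k" using assms by (simp add: mat2_mult_assoc_right)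
next
  assume "k ** c = c ** k"
  then have "matrix_inv k ** (k ** c) = matrix_inv k ** (c ** k)" by simp
  then show "c = matrix_inv k ** c ** k" using assms by (simp add: mat2_mult_assoc_right)
qed

lemma conjq_mat_one: "conjq (mat 1) q = q"
  by (cases q) (simp add: conjq_def)

lemma conjq_mult: "k \<in> SU2 \<Longrightarrow> m \<in> SU2 \<Longrightarrow> conjq k (conjq m q) = conjq (k ** m) q"
  by (cases q) (simp add: conjq_def mat2_mult_assoc_right)

lemma self_in_orbitK: "q \<in> orbitK q"
  unfolding orbitK_def using SU2_mat_one conjq_mat_one[symmetric] by (rule rev_image_eqI)

lemma orbitK_conjq:
  assumes "m \<in> SU2"
  shows "orbitK (conjq m q) = orbitK q"
proof
  show "orbitK (conjq m q) \<subseteq> orbitK q"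
    unfolding orbitK_def using assms by (auto simp: conjq_mult)
  show "orbitK q \<subseteq> orbitK (conjq m q)"
  proof
    fix p assume "p \<in> orbitK q"
    then obtain k where "k \<in> SU2" "p = conjq k q" unfolding orbitK_def by blast
    then have "p = conjq (k ** matrix_inv m) (conjq m q)"
      using assms by (simp add: conjq_mult flip: matrix_mul_assoc)
    then show "p \<in> orbitK (conjq m q)"
      unfolding orbitK_def using \<open>k \<in> SU2\<close> assms by auto
  qed
qed

definition swapped_quads :: "quad set" where
  "swapped_quads = {(g, h, h, g) | g h. g \<in> SU2 \<and> h \<in> SU2 \<and>
     comm g h \<noteq> mat 1 \<and> comm g h \<noteq> - mat 1}"

definition twisted_quads :: "quad set" where
  "twisted_quads = {(g, h, k ** h ** matrix_inv k, k ** g ** matrix_inv k) | g h k.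
     g \<in> SU2 \<and> h \<in> SU2 \<and> k \<in> SU2 \<and> k ** k = - mat 1 \<and> k ** comm g h = comm g h ** k \<and>
     comm g h \<noteq> mat 1 \<and> comm g h \<noteq> - mat 1}"

definition mirror_quad :: "quad \<Rightarrow> quad" where
  "mirror_quad q = (case q of (g, h, _, _) \<Rightarrow> (g, h, h, g))"

lemma mirror_quad_conjq: "mirror_quad (conjq k q) = conjq k (mirror_quad q)"
  by (cases q) (simp add: mirror_quad_def conjq_def)

lemma mirror_quad_orbitK: "mirror_quad ` orbitK q = orbitK (mirror_quad q)"
  unfolding orbitK_def image_image mirror_quad_conjq ..

lemma twisted_quad_relation:
  assumes "g \<in> SU2" "h \<in> SU2" "k \<in> SU2" and commute: "k ** comm g h = comm g h ** k"
  shows "comm g h ** comm (k ** h ** matrix_inv k) (k ** g ** matrix_inv k) = mat 1"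
proof -
  have "comm (k ** h ** matrix_inv k) (k ** g ** matrix_inv k) = k ** comm h g ** matrix_inv k"
    using assms by (simp add: comm_conj)
  then have "comm g h ** comm (k ** h ** matrix_inv k) (k ** g ** matrix_inv k)
      = comm g h ** k ** comm h g ** matrix_inv k"
    by (simp add: matrix_mul_assoc)
  also have "\<dots> = k ** (comm g h ** comm h g) ** matrix_inv k"
    using commute by (simp add: matrix_mul_assoc)
  finally show ?thesis using assms by (simp add: comm_mult_comm_swap)
qed

lemma mirror_quad_twisted_quads: "mirror_quad ` twisted_quads = swapped_quads"
proof
  show "mirror_quad ` twisted_quads \<subseteq> swapped_quads"
    unfolding twisted_quads_def swapped_quads_def by (auto simp: mirror_quad_def)
  show "swapped_quads \<subseteq> mirror_quad ` twisted_quads"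
  proof
    fix q assume "q \<in> swapped_quads"
    then obtain g h where q: "q = (g, h, h, g)" "g \<in> SU2" "h \<in> SU2"
      "comm g h \<noteq> mat 1" "comm g h \<noteq> - mat 1" unfolding swapped_quads_def by blast
    obtain k where "k \<in> SU2" "k ** k = - mat 1" "k ** comm g h = comm g h ** k"
      using SU2_sqrt_neg1_commuting_exists[of "comm g h"] q by auto
    then have "(g, h, k ** h ** matrix_inv k, k ** g ** matrix_inv k) \<in> twisted_quads"
      unfolding twisted_quads_def using q by blast
    then show "q \<in> mirror_quad ` twisted_quads"
      by (rule rev_image_eqI) (simp add: q mirror_quad_def)
  qed
qed

lemma twisted_quads_orbitK_eqI:
  assumes "q \<in> twisted_quads" "q' \<in> twisted_quads"
    and "orbitK (mirror_quad q) = orbitK (mirror_quad q')"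
  shows "orbitK q = orbitK q'"
proof -
  obtain g h k where q: "q = (g, h, k ** h ** matrix_inv k, k ** g ** matrix_inv k)"
    "g \<in> SU2" "h \<in> SU2" "k \<in> SU2" "k ** k = - mat 1" "k ** comm g h = comm g h ** k"
    "comm g h \<noteq> mat 1" "comm g h \<noteq> - mat 1"
    using assms(1) unfolding twisted_quads_def by blast
  obtain g' h' k' where q': "q' = (g', h', k' ** h' ** matrix_inv k', k' ** g' ** matrix_inv k')"
    "k' \<in> SU2" "k' ** k' = - mat 1" "k' ** comm g' h' = comm g' h' ** k'"
    using assms(2) unfolding twisted_quads_def by blast
  have "mirror_quad q' \<in> orbitK (mirror_quad q)" using assms(3) self_in_orbitK by metis
  then obtain m where m: "m \<in> SU2" "mirror_quad q' = conjq m (mirror_quad q)"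
    unfolding orbitK_def by blast
  then have g': "g' = m ** g ** matrix_inv m" and h': "h' = m ** h ** matrix_inv m"
    using q q' by (simp_all add: mirror_quad_def conjq_def)
  have "k' = m ** k ** matrix_inv m \<or> k' = - (m ** k ** matrix_inv m)"
    using SU2_sqrt_neg1_commuting_conj[of "comm g h" k k' m] q q' m g' h' by (simp add: comm_conj)
  then have "q' = conjq m q"
    using q q' m g' h' by (auto simp: conjq_def mat2_mult_assoc_right)
  then show ?thesis using orbitK_conjq[OF m(1)] by simp
qed

lemma bij_betw_mirror_quad_orbits:
  "bij_betw (image mirror_quad) (orbitK ` twisted_quads) (orbitK ` swapped_quads)"
proof (rule bij_betw_imageI)
  show "inj_on (image mirror_quad) (orbitK ` twisted_quads)"
  proof (rule inj_onI)
    fix S S' assume "S \<in> orbitK ` twisted_quads" "S' \<in> orbitK ` twisted_quads"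
      and eq: "mirror_quad ` S = mirror_quad ` S'"
    then obtain q q' where q: "q \<in> twisted_quads" "q' \<in> twisted_quads" "S = orbitK q" "S' = orbitK q'"
      by blast
    have "orbitK (mirror_quad q) = orbitK (mirror_quad q')"
      using eq unfolding q(3,4) mirror_quad_orbitK .
    with q(1,2) have "orbitK q = orbitK q'" by (rule twisted_quads_orbitK_eqI)
    then show "S = S'" using q(3,4) by simp
  qed
  show "image mirror_quad ` orbitK ` twisted_quads = orbitK ` swapped_quads"
    unfolding image_image mirror_quad_orbitK mirror_quad_twisted_quads[symmetric] ..
qed

theorem mainTheorem11:
  defines "A \<equiv> {(g, h, h, g) | g h. g \<in> SU2 \<and> h \<in> SU2 \<and>
                   comm g h ** comm h g = mat 1 \<and>
                   comm g h \<noteq> mat 1 \<and> comm g h \<noteq> - mat 1}"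
      and "B \<equiv> {(g, h, k ** h ** matrix_inv k, k ** g ** matrix_inv k) | g h k.
                   g \<in> SU2 \<and> h \<in> SU2 \<and> k \<in> SU2 \<and>
                   comm g h ** comm (k ** h ** matrix_inv k) (k ** g ** matrix_inv k) = mat 1 \<and>
                   comm g h = matrix_inv k ** comm g h ** k \<and>
                   comm g h \<noteq> mat 1 \<and> comm g h \<noteq> - mat 1 \<and>
                   k ** k = - mat 1}"
  shows "orbitK ` A \<subseteq> ModM \<and> orbitK ` B \<subseteq> ModM \<and>
         (\<exists>f. bij_betw f (orbitK ` A) (orbitK ` B))"
proof -
  have A: "A = swapped_quads"
    unfolding A_def swapped_quads_def by (auto simp: comm_mult_comm_swap)
  have B: "B = twisted_quads"
    unfolding B_def twisted_quads_def
    by (fastforce simp: conj_fixed_iff_commute twisted_quad_relation)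
  have "A \<subseteq> RepsK" "B \<subseteq> RepsK" unfolding A_def B_def RepsK_def by auto
  then have "orbitK ` A \<subseteq> ModM" "orbitK ` B \<subseteq> ModM" unfolding ModM_def by auto
  moreover have "bij_betw (image mirror_quad) (orbitK ` B) (orbitK ` A)"
    unfolding A B by (rule bij_betw_mirror_quad_orbits)
  ultimately show ?thesis
    using bij_betw_inv_into by blast
qed

end
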